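(* Let $q$ be an odd prime power with characteristic $p$, let $1\le n\le q^2-1$, and write $n=u+vq$ with $0\le u,v\le q-1$. Define \[ \mathrm{III}=\sum_{\substack{\alpha,\beta\ge 0,\ \beta\le q-2\\ 0<\alpha+\beta\le q-1}}\ \sum_{\substack{k\ge 1,\ j\ge 0\\ k+j\le q-1\\ 2k-j\equiv\alpha+\beta\pmod{q-1}\\ q(q-1)+k-j-(\alpha+\beta q)=n}}\binom{\alpha+\beta}{\alpha}\binom{q-1-k}{j}(-1)^j . \] Then in $\mathbb F_p$, \[ \mathrm{III}=\sum_{\substack{-1\le s\le 1\\ \max\{s-\frac{u+v}{q-1},\,v-q+1\}\le\epsilon<\min\{s-\frac{u+v}{q-1}+1,\,v\}}}(-1)^{v+\epsilon}\binom{u+2v-(s-\epsilon)(q-1)-\epsilon}{(s-2\epsilon+1)(q-1)-2u-v-\epsilon} -\sum_{\max\{-2,\,v-q+\frac{u+v}{q-1}\}<s\le\min\{1,\,v-q+\frac{u+v}{q-1}+1\}}\binom{u+v-(s-v+q-1)(q-1)}{(s-2v+2q)(q-1)-2(u+v)}, \] the sums being over integers $s,\epsilon$ in the indicated ranges.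
   Context: For integers $m\ge 0$ and $k$, $\binom mk$ is the usual binomial coefficient, equal to $0$ unless $0\le k\le m$; integers are interpreted in $\mathbb F_p$. *)

theory Defs
  imports "HOL-Number_Theory.Number_Theory"
begin

definition ibinom :: "int \<Rightarrow> int \<Rightarrow> int" where
  "ibinom m k = (if 0 \<le> k \<and> k \<le> m then int (nat m choose nat k) else 0)"

text \<open>The sum III (as an integer; its image in F_p is what the lemma is about).\<close>
definition sumIII :: "int \<Rightarrow> int \<Rightarrow> int" where
  "sumIII q n =
     (\<Sum>(\<alpha>, \<beta>, k, j) \<in> {(\<alpha>, \<beta>, k, j). 0 \<le> \<alpha> \<and> 0 \<le> \<beta> \<and> \<beta> \<le> q - 2 \<and>
            0 < \<alpha> + \<beta> \<and> \<alpha> + \<beta> \<le> q - 1 \<and>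
            1 \<le> k \<and> 0 \<le> j \<and> k + j \<le> q - 1 \<and>
            [2 * k - j = \<alpha> + \<beta>] (mod (q - 1)) \<and>
            q * (q - 1) + k - j - (\<alpha> + \<beta> * q) = n}.
        ibinom (\<alpha> + \<beta>) \<alpha> * ibinom (q - 1 - k) j * (-1) ^ nat j)"

definition rhsIII :: "int \<Rightarrow> int \<Rightarrow> int \<Rightarrow> int" where
  "rhsIII q u v =
     (\<Sum>(s, \<epsilon>) \<in> {(s, \<epsilon>). -1 \<le> s \<and> s \<le> 1 \<and>
          max (real_of_int s - real_of_int (u + v) / real_of_int (q - 1)) (real_of_int (v - q + 1))
            \<le> real_of_int \<epsilon> \<and>
          real_of_int \<epsilon> <
          min (real_of_int s - real_of_int (u + v) / real_of_int (q - 1) + 1) (real_of_int v)}.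
        (if even (v + \<epsilon>) then 1 else -1) *
        ibinom (u + 2 * v - (s - \<epsilon>) * (q - 1) - \<epsilon>)
               ((s - 2 * \<epsilon> + 1) * (q - 1) - 2 * u - v - \<epsilon>))
   - (\<Sum>s \<in> {s. max (-2) (real_of_int (v - q) + real_of_int (u + v) / real_of_int (q - 1))
                   < real_of_int s \<and>
                 real_of_int s \<le>
                   min 1 (real_of_int (v - q) + real_of_int (u + v) / real_of_int (q - 1) + 1)}.
        ibinom (u + v - (s - v + q - 1) * (q - 1))
               ((s - 2 * v + 2 * q) * (q - 1) - 2 * (u + v)))"

end

theory Submission
  imports Defs "HOL-Computational_Algebra.Formal_Power_Series"
begin

text \<open>The congruence in the summation range pins \<open>k\<close> to \<open>\<kappa> = q - 1 - \<rho>\<close>, where \<open>\<rho>\<close> is the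
  residue of \<open>u + v\<close> modulo \<open>q - 1\<close>, and then \<open>\<alpha>, \<beta>\<close> are the base-\<open>q\<close> digits of
  \<open>q(q - 1) + \<kappa> - n - j\<close>, so III collapses to a single sum over \<open>j\<close>. Modulo \<open>p\<close>, binomial
  coefficients with an arbitrary integer upper argument are \<open>q\<close>-periodic in that argument
  (because \<open>(1 + X)\<^sup>q = 1 + X\<^sup>q\<close>). This turns \<open>(-1)\<^sup>j (\<rho> choose j)\<close> into
  \<open>(\<kappa> + j choose \<kappa>)\<close>, lets the sum be extended to a full period, and evaluates it with the
  upper Vandermonde convolution. At most three binomials survive, and they match the at most
  three nonzero terms of the right-hand side after a case analysis on
  \<open>\<tau> = (u + v) div (q - 1) \<in> {0, 1, 2}\<close>.\<close>

definition gbinom :: "int \<Rightarrow> int \<Rightarrow> int" where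
  "gbinom x k =
     (if k < 0 then 0
      else if 0 \<le> x then int (nat x choose nat k)
      else (-1) ^ nat k * int (nat (k - x - 1) choose nat k))"

lemma of_int_gbinom:
  assumes "0 \<le> k"
  shows "(of_int (gbinom x k) :: 'a :: field_char_0) = of_int x gchoose nat k"
proof (cases "0 \<le> x")
  case True
  then show ?thesis
    using assms binomial_gbinomial[of "nat x" "nat k", where 'a = 'a] by (simp add: gbinom_def)
next
  case False
  have "(of_int x :: 'a) gchoose nat k = (-1) ^ nat k * ((of_nat (nat k) - of_int x - 1) gchoose nat k)"
    by (rule gbinomial_negated_upper)
  also have "(of_nat (nat k) - of_int x - 1 :: 'a) = of_nat (nat (k - x - 1))"
    using assms False by simp
  finally show ?thesis
    using assms False by (simp add: gbinom_def binomial_gbinomial)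
qed

lemma gbinom_negative [simp]: "k < 0 \<Longrightarrow> gbinom x k = 0"
  by (simp add: gbinom_def)

lemma gbinom_0 [simp]: "gbinom x 0 = 1"
  by (simp add: gbinom_def)

lemma gbinom_of_nonneg: "0 \<le> x \<Longrightarrow> gbinom x k = ibinom x k"
  by (auto simp: gbinom_def ibinom_def binomial_eq_0 nat_less_eq_zless)

lemma gbinom_of_nat [simp]: "gbinom (int n) (int k) = int (n choose k)"
  by (simp add: gbinom_def)

lemma gbinom_eq_0: "0 \<le> x \<Longrightarrow> x < k \<Longrightarrow> gbinom x k = 0"
  by (simp add: gbinom_of_nonneg ibinom_def)

lemma gbinom_negated_upper: "0 \<le> k \<Longrightarrow> gbinom x k = (-1) ^ nat k * gbinom (k - x - 1) k"
  by (rule of_int_eq_iff[where 'a = rat, THEN iffD1])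
     (simp add: of_int_gbinom gbinomial_negated_upper[of "rat_of_int x"])

lemma gbinom_symmetric:
  assumes "0 \<le> k" and "k \<le> x"
  shows "gbinom x k = gbinom x (x - k)"
proof -
  have "nat x choose nat k = nat x choose (nat x - nat k)"
    using assms by (intro binomial_symmetric nat_mono)
  then show ?thesis
    using assms by (simp add: gbinom_def nat_diff_distrib)
qed

lemma gbinom_Vandermonde:
  "gbinom (x + y) (int n) = (\<Sum>i\<le>n. gbinom x (int i) * gbinom y (int (n - i)))"
  by (rule of_int_eq_iff[where 'a = rat, THEN iffD1])
     (auto simp: of_int_gbinom atMost_atLeast0 gbinomial_Vandermonde[symmetric]
        simp flip: of_nat_diff intro!: sum.cong)

lemma gbinom_of_nat_as_negated:
  "gbinom (int (k + j)) (int k) = (-1) ^ j * gbinom (- int k - 1) (int j)"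
proof -
  have "gbinom (int (k + j)) (int k) = gbinom (int (k + j)) (int j)"
    using gbinom_symmetric[of "int k" "int (k + j)"] by simp
  also have "\<dots> = (-1) ^ j * gbinom (- int k - 1) (int j)"
    by (subst gbinom_negated_upper) simp_all
  finally show ?thesis .
qed

lemma sum_gbinom_upper_convolution:
  assumes "0 \<le> a" and "0 \<le> b" and "0 \<le> k"
  shows "(\<Sum>j\<le>nat a. gbinom (k + int j) k * gbinom (a - int j + b) b) = gbinom (a + b + k + 1) a"
proof -
  obtain A B K where ABK: "a = int A" "b = int B" "k = int K"
    using assms by (metis nonneg_eq_int)
  have "(\<Sum>j\<le>A. gbinom (int (K + j)) (int K) * gbinom (int (A - j + B)) (int B)) =
      (\<Sum>j\<le>A. (-1) ^ A * (gbinom (- int K - 1) (int j) * gbinom (- int B - 1) (int (A - j))))"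
  proof (rule sum.cong)
    fix j assume "j \<in> {..A}"
    then have "(-1 :: int) ^ j * (-1) ^ (A - j) = (-1) ^ A"
      by (simp flip: power_add)
    then show "gbinom (int (K + j)) (int K) * gbinom (int (A - j + B)) (int B) =
        (-1) ^ A * (gbinom (- int K - 1) (int j) * gbinom (- int B - 1) (int (A - j)))"
      using gbinom_of_nat_as_negated[of K j] gbinom_of_nat_as_negated[of B "A - j"]
      by (simp add: add.commute mult_ac)
  qed simp
  also have "\<dots> = (-1) ^ A * gbinom ((- int K - 1) + (- int B - 1)) (int A)"
    by (simp only: gbinom_Vandermonde sum_distrib_left)
  also have "\<dots> = gbinom (int (A + B + K + 1)) (int A)"
  proof -
    define X where "X = int (A + B + K + 1)"
    have X: "- int K - 1 + (- int B - 1) = int A - X - 1"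
      by (simp add: X_def)
    have "gbinom X (int A) = (-1) ^ A * gbinom (int A - X - 1) (int A)"
      using gbinom_negated_upper[of "int A" X] by simp
    then show ?thesis
      unfolding X X_def[symmetric] by (simp add: mult.assoc[symmetric] flip: power_add)
  qed
  finally have "(\<Sum>j\<le>A. gbinom (int (K + j)) (int K) * gbinom (int (A - j + B)) (int B)) =
      gbinom (int (A + B + K + 1)) (int A)" .
  moreover have "(\<Sum>j\<le>nat a. gbinom (k + int j) k * gbinom (a - int j + b) b) =
      (\<Sum>j\<le>A. gbinom (int (K + j)) (int K) * gbinom (int (A - j + B)) (int B))"
    unfolding ABK by (intro sum.cong) (auto simp: algebra_simps)
  moreover have "a + b + k + 1 = int (A + B + K + 1)"
    using ABK by simp
  ultimately show ?thesis
    using ABK by (simp only:)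
qed

lemma prime_dvd_prime_power_choose:
  assumes "prime p" and "0 < i" and "i < p ^ m"
  shows "p dvd (p ^ m choose i)"
proof (rule ccontr)
  assume "\<not> p dvd (p ^ m choose i)"
  then have "coprime (p ^ m) (p ^ m choose i)"
    using assms(1) by (simp add: coprime_commute prime_imp_coprime)
  moreover have "p ^ m dvd (p ^ m choose i) * i"
  proof -
    obtain N where N: "p ^ m = Suc N"
      using assms(3) by (cases "p ^ m") auto
    obtain j where j: "i = Suc j"
      using assms(2) by (cases i) auto
    show ?thesis
      using Suc_times_binomial_eq[of N j] unfolding N j by (metis dvd_triv_left)
  qed
  ultimately have "p ^ m dvd i"
    using coprime_dvd_mult_right_iff by blast
  then show False
    using assms(2,3) by (simp add: nat_dvd_not_less)
qed

text \<open>Vandermonde's identity for \<open>q + x\<close>, in which \<open>p\<close> divides every \<open>q choose i\<close> with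
  \<open>0 < i < q\<close>.\<close>

lemma gbinom_add_prime_power_cong:
  assumes p: "prime p" and q: "q = int p ^ m"
  shows "[gbinom (x + q) k = gbinom x k + gbinom x (k - q)] (mod int p)"
proof (cases "k < 0")
  case True
  moreover have "q > 0" using q p by (simp add: prime_gt_0_nat)
  ultimately show ?thesis by simp
next
  case False
  then obtain K where K: "k = int K" by (metis nonneg_eq_int not_less)
  define Q where "Q = p ^ m"
  have qQ: "q = int Q" using q by (simp add: Q_def)
  have term_cong: "[int (Q choose i) * gbinom x (int (K - i)) =
      (if i = 0 then gbinom x k else 0) + (if i = Q then gbinom x (k - q) else 0)] (mod int p)"
    if "i \<le> K" for i
  proof -
    have Q0: "0 < Q" using p by (simp add: Q_def prime_gt_0_nat)
    consider "i = 0" | "i = Q" | "0 < i" "i < Q" | "Q < i" by linarith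
    then show ?thesis
    proof cases
      case 1
      then show ?thesis using Q0 K by simp
    next
      case 2
      then show ?thesis using that K qQ Q0 by simp
    next
      case 3
      then have "int p dvd int (Q choose i)"
        using prime_dvd_prime_power_choose[OF p] by (simp add: Q_def)
      with 3 show ?thesis by (simp add: cong_0_iff)
    next
      case 4
      then show ?thesis by (simp add: binomial_eq_0)
    qed
  qed
  have "gbinom (x + q) k = gbinom (int Q + x) (int K)"
    using K qQ by (simp only: add.commute)
  also have "\<dots> = (\<Sum>i\<le>K. int (Q choose i) * gbinom x (int (K - i)))"
    by (simp add: gbinom_Vandermonde)
  also have "[\<dots> = (\<Sum>i\<le>K. (if i = 0 then gbinom x k else 0) + (if i = Q then gbinom x (k - q) else 0))] (mod int p)"
    using term_cong by (intro cong_sum) auto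
  also have "(\<Sum>i\<le>K. (if i = 0 then gbinom x k else 0) + (if i = Q then gbinom x (k - q) else 0)) =
      gbinom x k + (if Q \<le> K then gbinom x (k - q) else 0)"
    by (simp add: sum.distrib)
  also have "(if Q \<le> K then gbinom x (k - q) else 0) = gbinom x (k - q)"
    using K qQ by auto
  finally show ?thesis .
qed

lemma gbinom_periodic_cong:
  assumes p: "prime p" and q: "q = int p ^ m" and k: "0 \<le> k" "k < q"
  shows "[gbinom (x + c * q) k = gbinom x k] (mod int p)"
proof -
  have shift: "[gbinom (y + q) k = gbinom y k] (mod int p)" for y
    using gbinom_add_prime_power_cong[OF p q, of y k] k by simp
  show ?thesis
  proof (induction c rule: int_induct[of _ 0])
    case (step1 c)
    have "x + (c + 1) * q = (x + c * q) + q" by (simp add: algebra_simps)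
    then show ?case
      using cong_trans[OF shift step1.IH] by (simp only: add.assoc)
  next
    case (step2 c)
    have "x + c * q = (x + (c - 1) * q) + q" by (simp add: algebra_simps)
    then have "[gbinom (x + (c - 1) * q) k = gbinom (x + c * q) k] (mod int p)"
      using shift[of "x + (c - 1) * q"] by (simp add: cong_sym_eq add.assoc)
    then show ?case
      using step2.IH by (rule cong_trans)
  qed simp
qed

text \<open>The convolution up to \<open>a + q\<close> splits into the ranges \<open>[0, a]\<close>, \<open>(a, q - 1]\<close> and
  \<open>[q, q + a]\<close>; by periodicity the outer two are both congruent to the convolution up to \<open>a\<close>.\<close>

lemma sum_gbinom_convolution_tail_cong:
  assumes p: "prime p" and q: "q = int p ^ m"
    and a: "0 \<le> a" "a < q" and b: "0 \<le> b" "b < q" and k: "0 \<le> k" "k < q"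
  shows "[(\<Sum>j = Suc (nat a)..nat (q - 1). gbinom (k + int j) k * gbinom (a + q - int j + b) b)
          = gbinom (a + q + b + k + 1) (a + q) - 2 * gbinom (a + b + k + 1) a] (mod int p)"
proof -
  define A where "A = nat a"
  define Q where "Q = nat (q - 1)"
  define f where "f j = gbinom (k + int j) k * gbinom (a + q - int j + b) b" for j
  define V where "V = gbinom (a + b + k + 1) a"
  have aA: "a = int A" and qQ: "q = int Q + 1" and AQ: "A \<le> Q"
    using a by (simp_all add: A_def Q_def)
  have head: "[(\<Sum>j\<le>A. f j) = V] (mod int p)"
  proof -
    have "[f j = gbinom (k + int j) k * gbinom (a - int j + b) b] (mod int p)" for j
    proof -
      have "a + q - int j + b = (a - int j + b) + 1 * q" by simp
      then show ?thesis
        unfolding f_def by (metis cong_scalar_left gbinom_periodic_cong[OF p q b])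
    qed
    then have "[(\<Sum>j\<le>A. f j) = (\<Sum>j\<le>A. gbinom (k + int j) k * gbinom (a - int j + b) b)] (mod int p)"
      by (intro cong_sum) auto
    then show ?thesis
      using sum_gbinom_upper_convolution[OF a(1) b(1) k(1)] by (simp add: A_def V_def)
  qed
  have last: "[(\<Sum>j\<le>A. f (j + (Q + 1))) = V] (mod int p)"
  proof -
    have "[f (j + (Q + 1)) = gbinom (k + int j) k * gbinom (a - int j + b) b] (mod int p)" for j
    proof -
      have "k + int (j + (Q + 1)) = (k + int j) + 1 * q" and "a + q - int (j + (Q + 1)) + b = a - int j + b"
        using qQ by simp_all
      then show ?thesis
        unfolding f_def by (metis cong_scalar_right gbinom_periodic_cong[OF p q k])
    qed
    then have "[(\<Sum>j\<le>A. f (j + (Q + 1))) = (\<Sum>j\<le>A. gbinom (k + int j) k * gbinom (a - int j + b) b)] (mod int p)"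
      by (intro cong_sum) auto
    then show ?thesis
      using sum_gbinom_upper_convolution[OF a(1) b(1) k(1)] by (simp add: A_def V_def)
  qed
  have "(\<Sum>j\<le>Q + (A + 1). f j) = gbinom (a + q + b + k + 1) (a + q)"
  proof -
    have "nat (a + q) = Q + (A + 1)" using aA qQ by simp
    then show ?thesis
      using sum_gbinom_upper_convolution[of "a + q" b k] a b k by (simp add: f_def algebra_simps)
  qed
  moreover have "(\<Sum>j\<le>Q + (A + 1). f j) = (\<Sum>j\<le>A. f j) + (\<Sum>j = Suc A..Q. f j) + (\<Sum>j\<le>A. f (j + (Q + 1)))"
  proof -
    have "(\<Sum>j\<le>Q. f j) = (\<Sum>j\<le>A. f j) + (\<Sum>j = Suc A..Q. f j)"
      using sum_up_index_split[of f A "Q - A"] AQ by simp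
    moreover have "(\<Sum>j = Suc Q..Q + (A + 1). f j) = (\<Sum>j\<le>A. f (j + (Q + 1)))"
      using sum.shift_bounds_cl_nat_ivl[of f 0 "Q + 1" A] by (simp add: atLeast0AtMost add.commute)
    ultimately show ?thesis
      using sum_up_index_split[of f Q "A + 1"] by simp
  qed
  ultimately have "(\<Sum>j = Suc A..Q. f j) =
      gbinom (a + q + b + k + 1) (a + q) - (\<Sum>j\<le>A. f j) - (\<Sum>j\<le>A. f (j + (Q + 1)))"
    by simp
  also have "[\<dots> = gbinom (a + q + b + k + 1) (a + q) - V - V] (mod int p)"
    by (intro cong_diff head last cong_refl)
  finally show ?thesis
    by (simp add: f_def V_def A_def Q_def)
qed

lemma gbinom_shift_both_cong:
  assumes p: "prime p" and q: "q = int p ^ m" and a: "0 \<le> a" "a < q"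
  shows "[gbinom (x + q) (a + q) - 2 * gbinom x a = gbinom (x - q) (a + q)] (mod int p)"
proof -
  have "[gbinom (x + q) (a + q) = gbinom x (a + q) + gbinom x a] (mod int p)"
    using gbinom_add_prime_power_cong[OF p q, of x "a + q"] by simp
  moreover have "[gbinom x (a + q) = gbinom (x - q) (a + q) + gbinom (x - q) a] (mod int p)"
    using gbinom_add_prime_power_cong[OF p q, of "x - q" "a + q"] by simp
  moreover have "[gbinom (x - q) a = gbinom x a] (mod int p)"
    using gbinom_periodic_cong[OF p q a, of x "-1"] by simp
  ultimately have "[gbinom (x + q) (a + q) + gbinom x (a + q) + gbinom (x - q) a =
      (gbinom x (a + q) + gbinom x a) + (gbinom (x - q) (a + q) + gbinom (x - q) a) + gbinom x a] (mod int p)"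
    by (intro cong_add)
  then show ?thesis
    by (simp add: cong_iff_dvd_diff algebra_simps)
qed

lemma int_window_below_iff:
  fixes c e :: int and f :: real
  assumes "0 \<le> f" and "f < 1"
  shows "(real_of_int c - f \<le> real_of_int e \<and> real_of_int e < real_of_int c - f + 1) \<longleftrightarrow> e = c"
proof
  assume "real_of_int c - f \<le> real_of_int e \<and> real_of_int e < real_of_int c - f + 1"
  then have "real_of_int (c - 1) < real_of_int e" and "real_of_int e < real_of_int (c + 1)"
    using assms by simp_all
  then have "c - 1 < e" and "e < c + 1"
    by (simp_all only: of_int_less_iff)
  then show "e = c"
    by linarith
qed (use assms in simp)

lemma int_window_above_iff:
  fixes c s :: int and f :: real
  assumes "0 \<le> f" and "f < 1"
  shows "(real_of_int c + f < real_of_int s \<and> real_of_int s \<le> real_of_int c + f + 1) \<longleftrightarrow> s = c + 1"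
proof
  assume "real_of_int c + f < real_of_int s \<and> real_of_int s \<le> real_of_int c + f + 1"
  then have "real_of_int c < real_of_int s" and "real_of_int s < real_of_int (c + 2)"
    using assms by simp_all
  then have "c < s" and "s < c + 2"
    by (simp_all only: of_int_less_iff)
  then show "s = c + 1"
    by linarith
qed (use assms in simp)

lemma sign_times_minus_one_power:
  assumes "0 \<le> a" and "even (a + b)"
  shows "(if even b then 1 else -1) * (-1 :: int) ^ nat a = 1"
proof -
  have "even (nat a) \<longleftrightarrow> even b"
    using assms by (simp add: even_nat_iff)
  then show ?thesis
    by (cases "even b") (simp_all add: minus_one_power_iff)
qed

definition admissible_digits :: "int \<Rightarrow> int \<Rightarrow> bool" where
  "admissible_digits q N \<longleftrightarrow>
     0 \<le> N div q \<and> N div q \<le> q - 2 \<and> 0 < N mod q + N div q \<and> N mod q + N div q \<le> q - 1"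

definition digit_binom :: "int \<Rightarrow> int \<Rightarrow> int" where
  "digit_binom q N =
     (if admissible_digits q N then ibinom (N mod q + N div q) (N mod q) else 0)"

definition digit_gbinom :: "int \<Rightarrow> int \<Rightarrow> int" where
  "digit_gbinom q N =
     (if 0 \<le> N div q \<and> N div q \<le> q - 2 then gbinom (N mod q + N div q) (N div q) else 0)"

lemma digit_binom_cong:
  assumes p: "prime p" and q: "q = int p ^ m" and q2: "2 \<le> q"
  shows "[digit_binom q N = digit_gbinom q N - (if N = 0 then 1 else 0)] (mod int p)"
proof -
  define a where "a = N mod q"
  define b where "b = N div q"
  have a: "0 \<le> a" "a < q" and N: "N = a + b * q"
    using q2 by (simp_all add: a_def b_def)
  have N0: "N = 0 \<longleftrightarrow> a = 0 \<and> b = 0"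
  proof
    show "N = 0 \<Longrightarrow> a = 0 \<and> b = 0"
      by (simp add: a_def b_def)
    show "a = 0 \<and> b = 0 \<Longrightarrow> N = 0"
      using N by simp
  qed
  consider "\<not> (0 \<le> b \<and> b \<le> q - 2)" | "0 \<le> b" "b \<le> q - 2" "a + b = 0"
    | "0 \<le> b" "b \<le> q - 2" "0 < a + b" "a + b \<le> q - 1" | "0 \<le> b" "b \<le> q - 2" "q \<le> a + b"
    using a by linarith
  then show ?thesis
  proof cases
    case 1
    then have "N \<noteq> 0" using N0 q2 by auto
    with 1 show ?thesis
      by (auto simp add: digit_binom_def admissible_digits_def digit_gbinom_def simp flip: a_def b_def)
  next
    case 2
    then have "a = 0" "b = 0" "N = 0" using a N0 by auto
    then show ?thesis
      using q2 by (simp add: digit_binom_def admissible_digits_def digit_gbinom_def)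
  next
    case 3
    then have "ibinom (a + b) a = gbinom (a + b) b"
      using a gbinom_symmetric[of a "a + b"] by (simp add: gbinom_of_nonneg)
    moreover have "N \<noteq> 0"
      using 3 N0 by auto
    ultimately show ?thesis
      using 3 by (simp add: digit_binom_def admissible_digits_def digit_gbinom_def flip: a_def b_def)
  next
    case 4
    \<comment> \<open>then \<open>0 \<le> a + b - q < b\<close>, so the binomial vanishes after one period\<close>
    have "[gbinom ((a + b) + (-1) * q) b = gbinom (a + b) b] (mod int p)"
      using gbinom_periodic_cong[OF p q, of b "a + b" "-1"] 4 q2 by linarith
    moreover have "gbinom ((a + b) + (-1) * q) b = 0"
      using 4 a by (intro gbinom_eq_0) simp_all
    ultimately show ?thesis
      using 4 N0 q2
      by (simp add: digit_binom_def admissible_digits_def digit_gbinom_def cong_sym_eq flip: a_def b_def)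
  qed
qed

locale sumIII_setup =
  fixes p m :: nat and q n u v :: int
  assumes prime_p: "prime p" and odd_p: "odd p" and m_pos: "m \<ge> 1" and q_def: "q = int p ^ m"
    and u_nonneg: "0 \<le> u" and u_le: "u \<le> q - 1" and v_nonneg: "0 \<le> v" and v_le: "v \<le> q - 1"
    and n_eq: "n = u + v * q"
begin

definition "\<rho> = (u + v) mod (q - 1)"
definition "\<tau> = (u + v) div (q - 1)"
definition "\<kappa> = q - 1 - \<rho>"

text \<open>\<open>N\<^sub>0 - j\<close> is the number whose base-\<open>q\<close> digits are \<open>\<alpha>, \<beta>\<close> in the summand with
  \<open>k = \<kappa>\<close> and index \<open>j\<close> of III.\<close>

definition "N\<^sub>0 = q * (q - 1) + \<kappa> - n"

lemma q_ge_3: "q \<ge> 3"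
proof -
  have "p \<ge> 3"
    using prime_ge_2_nat[OF prime_p] odd_p by presburger
  then have "p ^ 1 \<le> p ^ m"
    using m_pos by (intro power_increasing) auto
  then have "int p \<le> int p ^ m"
    by (metis of_nat_le_iff of_nat_power power_one_right)
  then show ?thesis
    using \<open>p \<ge> 3\<close> q_def by linarith
qed

lemma odd_q: "odd q"
  using odd_p q_def by simp

lemma rho_bounds: "0 \<le> \<rho>" "\<rho> < q - 1"
  using q_ge_3 by (simp_all add: \<rho>_def)

lemma kappa_bounds: "1 \<le> \<kappa>" "\<kappa> \<le> q - 1"
  using rho_bounds by (simp_all add: \<kappa>_def)

lemma u_plus_v_eq: "u + v = \<tau> * (q - 1) + \<rho>"
  unfolding \<tau>_def \<rho>_def by (rule div_mult_mod_eq[symmetric])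

lemma tau_cases: "(\<tau> = 0 \<and> u + v = \<rho>) \<or> (\<tau> = 1 \<and> u + v = q - 1 + \<rho>) \<or> (\<tau> = 2 \<and> u + v = 2 * q - 2 + \<rho>)"
proof -
  have "0 \<le> \<tau>"
    using u_nonneg v_nonneg q_ge_3 by (simp add: \<tau>_def pos_imp_zdiv_nonneg_iff)
  moreover have "\<tau> * (q - 1) \<le> 2 * (q - 1)"
    using u_plus_v_eq rho_bounds u_le v_le by (simp add: algebra_simps)
  then have "\<tau> \<le> 2"
    by (rule mult_right_le_imp_le) (use q_ge_3 in simp)
  ultimately have "\<tau> = 0 \<or> \<tau> = 1 \<or> \<tau> = 2"
    by auto
  then show ?thesis
    using u_plus_v_eq by (auto simp: algebra_simps)
qed

lemma k_eq_kappa: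
  assumes "1 \<le> k" "k \<le> q - 1" and "[2 * k - j = \<alpha> + \<beta>] (mod (q - 1))"
    and "q * (q - 1) + k - j - (\<alpha> + \<beta> * q) = n"
  shows "k = \<kappa>"
proof -
  have "2 * k - j - (\<alpha> + \<beta>) = (k - \<kappa>) + (q - 1) * (\<tau> + 1 + v - q + \<beta>)"
    using assms(4) u_plus_v_eq n_eq by (simp add: \<kappa>_def algebra_simps)
  moreover have "(q - 1) dvd (2 * k - j - (\<alpha> + \<beta>))"
    using assms(3) by (simp add: cong_iff_dvd_diff)
  ultimately have "(q - 1) dvd (k - \<kappa>)"
    by (metis dvd_add_left_iff dvd_triv_left)
  moreover have "\<bar>k - \<kappa>\<bar> < q - 1"
    using assms(1,2) kappa_bounds by linarith
  ultimately show ?thesis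
    using dvd_imp_le_int[of "k - \<kappa>" "q - 1"] by fastforce
qed

lemma sumIII_index_iff:
  "(0 \<le> \<alpha> \<and> 0 \<le> \<beta> \<and> \<beta> \<le> q - 2 \<and> 0 < \<alpha> + \<beta> \<and> \<alpha> + \<beta> \<le> q - 1 \<and>
    1 \<le> k \<and> 0 \<le> j \<and> k + j \<le> q - 1 \<and> [2 * k - j = \<alpha> + \<beta>] (mod (q - 1)) \<and>
    q * (q - 1) + k - j - (\<alpha> + \<beta> * q) = n) \<longleftrightarrow>
   (k = \<kappa> \<and> 0 \<le> j \<and> j \<le> \<rho> \<and> admissible_digits q (N\<^sub>0 - j) \<and>
    \<alpha> = (N\<^sub>0 - j) mod q \<and> \<beta> = (N\<^sub>0 - j) div q)"
  (is "?lhs \<longleftrightarrow> ?rhs")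
proof
  assume lhs: ?lhs
  then have k: "k = \<kappa>"
    using k_eq_kappa by auto
  then have N: "N\<^sub>0 - j = \<alpha> + \<beta> * q"
    using lhs by (simp add: N\<^sub>0_def)
  have "(N\<^sub>0 - j) mod q = \<alpha>" "(N\<^sub>0 - j) div q = \<beta>"
    unfolding N using lhs by simp_all
  then show ?rhs
    using lhs k by (simp add: admissible_digits_def \<kappa>_def)
next
  assume rhs: ?rhs
  define N where "N = N\<^sub>0 - j"
  have N: "N = \<alpha> + \<beta> * q" and \<alpha>: "0 \<le> \<alpha>"
    using rhs q_ge_3 by (simp_all add: N_def)
  have "2 * \<kappa> - j - (\<alpha> + \<beta>) = (q - 1) * (\<tau> + 1 + v - q + \<beta>)"
  proof -
    have "\<alpha> + \<beta> = q * (q - 1) + \<kappa> - n - j - \<beta> * (q - 1)"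
      using N by (simp add: N_def N\<^sub>0_def algebra_simps)
    then show ?thesis
      using u_plus_v_eq n_eq by (simp add: \<kappa>_def algebra_simps)
  qed
  then have "[2 * \<kappa> - j = \<alpha> + \<beta>] (mod (q - 1))"
    by (simp add: cong_iff_dvd_diff)
  moreover have "q * (q - 1) + \<kappa> - j - (\<alpha> + \<beta> * q) = n"
    using N by (simp add: N_def N\<^sub>0_def)
  ultimately show ?lhs
    using rhs \<alpha> kappa_bounds by (auto simp: admissible_digits_def \<kappa>_def)
qed

lemma sumIII_eq_digit_sum:
  "sumIII q n = (\<Sum>j\<le>nat \<rho>. ibinom \<rho> (int j) * (-1) ^ j * digit_binom q (N\<^sub>0 - int j))"
proof -
  define J where "J = {j \<in> {..nat \<rho>}. admissible_digits q (N\<^sub>0 - int j)}"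
  define h where "h j = ((N\<^sub>0 - int j) mod q, (N\<^sub>0 - int j) div q, \<kappa>, int j)" for j
  define I where "I = {(\<alpha>, \<beta>, k, j). 0 \<le> \<alpha> \<and> 0 \<le> \<beta> \<and> \<beta> \<le> q - 2 \<and>
      0 < \<alpha> + \<beta> \<and> \<alpha> + \<beta> \<le> q - 1 \<and> 1 \<le> k \<and> 0 \<le> j \<and> k + j \<le> q - 1 \<and>
      [2 * k - j = \<alpha> + \<beta>] (mod (q - 1)) \<and> q * (q - 1) + k - j - (\<alpha> + \<beta> * q) = n}"
  have index_set: "I = h ` J"
  proof (rule Set.set_eqI)
    fix x :: "int \<times> int \<times> int \<times> int"
    obtain \<alpha> \<beta> k j where x: "x = (\<alpha>, \<beta>, k, j)"
      by (cases x) auto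
    have "x \<in> h ` J \<longleftrightarrow> k = \<kappa> \<and> 0 \<le> j \<and> j \<le> \<rho> \<and> admissible_digits q (N\<^sub>0 - j) \<and>
        \<alpha> = (N\<^sub>0 - j) mod q \<and> \<beta> = (N\<^sub>0 - j) div q"
    proof
      assume "x \<in> h ` J"
      then show "k = \<kappa> \<and> 0 \<le> j \<and> j \<le> \<rho> \<and> admissible_digits q (N\<^sub>0 - j) \<and>
          \<alpha> = (N\<^sub>0 - j) mod q \<and> \<beta> = (N\<^sub>0 - j) div q"
        using rho_bounds by (auto simp: x h_def J_def)
    next
      assume "k = \<kappa> \<and> 0 \<le> j \<and> j \<le> \<rho> \<and> admissible_digits q (N\<^sub>0 - j) \<and>
          \<alpha> = (N\<^sub>0 - j) mod q \<and> \<beta> = (N\<^sub>0 - j) div q"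
      then show "x \<in> h ` J"
        by (intro image_eqI[of _ _ "nat j"]) (auto simp: x h_def J_def)
    qed
    then show "x \<in> I \<longleftrightarrow> x \<in> h ` J"
      unfolding x I_def by (simp only: mem_Collect_eq prod.case sumIII_index_iff)
  qed
  have "sumIII q n = (\<Sum>j\<in>J. ibinom \<rho> (int j) * (-1) ^ j * digit_binom q (N\<^sub>0 - int j))"
    unfolding sumIII_def I_def[symmetric] index_set
    by (subst sum.reindex) (auto simp: inj_on_def h_def J_def digit_binom_def \<kappa>_def mult_ac)
  also have "\<dots> = (\<Sum>j\<le>nat \<rho>. ibinom \<rho> (int j) * (-1) ^ j * digit_binom q (N\<^sub>0 - int j))"
    unfolding J_def by (subst sum.inter_filter) (auto simp: digit_binom_def intro!: sum.cong)
  finally show ?thesis .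
qed

lemma alternating_binom_cong:
  assumes "j \<le> nat \<rho>"
  shows "[ibinom \<rho> (int j) * (-1) ^ j = gbinom (\<kappa> + int j) \<kappa>] (mod int p)"
proof -
  have "ibinom \<rho> (int j) * (-1) ^ j = ((-1) ^ j * (-1) ^ j) * gbinom (int j - \<rho> - 1) (int j)"
    using gbinom_negated_upper[of "int j" \<rho>] rho_bounds by (simp add: gbinom_of_nonneg)
  also have "\<dots> = gbinom ((\<kappa> + int j) + (-1) * q) (int j)"
    by (simp add: \<kappa>_def flip: power_add)
  also have "[\<dots> = gbinom (\<kappa> + int j) (int j)] (mod int p)"
    by (intro gbinom_periodic_cong[OF prime_p q_def]) (use assms rho_bounds in auto)
  also have "gbinom (\<kappa> + int j) (int j) = gbinom (\<kappa> + int j) \<kappa>"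
    using gbinom_symmetric[of "int j" "\<kappa> + int j"] kappa_bounds by simp
  finally show ?thesis .
qed

lemma gbinom_kappa_vanishes_cong:
  assumes "nat \<rho> < j" and "j \<le> nat (q - 1)"
  shows "[gbinom (\<kappa> + int j) \<kappa> = 0] (mod int p)"
proof -
  have "[gbinom ((\<kappa> + int j) + (-1) * q) \<kappa> = gbinom (\<kappa> + int j) \<kappa>] (mod int p)"
    by (intro gbinom_periodic_cong[OF prime_p q_def]) (use kappa_bounds in auto)
  moreover have "gbinom ((\<kappa> + int j) + (-1) * q) \<kappa> = 0"
    using assms kappa_bounds rho_bounds by (intro gbinom_eq_0) (simp_all add: \<kappa>_def)
  ultimately show ?thesis
    by (simp add: cong_sym_eq)
qed

lemma sumIII_cong_period_sum:
  "[sumIII q n = (\<Sum>j\<le>nat (q - 1). gbinom (\<kappa> + int j) \<kappa> *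
      (digit_gbinom q (N\<^sub>0 - int j) - (if N\<^sub>0 - int j = 0 then 1 else 0)))] (mod int p)"
proof -
  define f where "f j = gbinom (\<kappa> + int j) \<kappa> *
      (digit_gbinom q (N\<^sub>0 - int j) - (if N\<^sub>0 - int j = 0 then 1 else 0))" for j
  have "[sumIII q n = (\<Sum>j\<le>nat \<rho>. f j)] (mod int p)"
    unfolding sumIII_eq_digit_sum f_def
  proof (intro cong_sum cong_mult)
    fix j assume "j \<in> {..nat \<rho>}"
    then show "[ibinom \<rho> (int j) * (-1) ^ j = gbinom (\<kappa> + int j) \<kappa>] (mod int p)"
      by (simp add: alternating_binom_cong)
    show "[digit_binom q (N\<^sub>0 - int j) =
        digit_gbinom q (N\<^sub>0 - int j) - (if N\<^sub>0 - int j = 0 then 1 else 0)] (mod int p)"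
      using q_ge_3 by (intro digit_binom_cong[OF prime_p q_def]) simp
  qed
  also have "(\<Sum>j\<le>nat \<rho>. f j) = (\<Sum>j\<le>nat (q - 1). if j \<le> nat \<rho> then f j else 0)"
  proof -
    have "{..nat (q - 1)} \<inter> {j. j \<le> nat \<rho>} = {..nat \<rho>}"
      using rho_bounds by auto
    then show ?thesis
      by (simp add: sum.If_cases)
  qed
  also have "[\<dots> = (\<Sum>j\<le>nat (q - 1). f j)] (mod int p)"
  proof (intro cong_sum)
    fix j assume "j \<in> {..nat (q - 1)}"
    then show "[(if j \<le> nat \<rho> then f j else 0) = f j] (mod int p)"
      using cong_scalar_right[OF gbinom_kappa_vanishes_cong[of j]] unfolding f_def
      by (auto simp: cong_sym_eq)
  qed
  finally show ?thesis
    by (simp add: f_def)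
qed

definition "\<alpha>\<^sub>0 = N\<^sub>0 mod q"
definition "\<beta>\<^sub>0 = N\<^sub>0 div q"
definition "M = \<alpha>\<^sub>0 + \<beta>\<^sub>0 + \<kappa>"

text \<open>Splitting the period sum at \<open>j = \<alpha>\<^sub>0\<close>, beyond which \<open>N\<^sub>0 - j\<close> borrows from its high
  digit, and the correction at \<open>N\<^sub>0 - j = 0\<close> produce the following three binomials.\<close>

definition "head_binom = gbinom (M + 1) \<alpha>\<^sub>0"
definition "tail_binom = gbinom (M - q) (\<alpha>\<^sub>0 + q)"
definition "corner_binom = gbinom M \<alpha>\<^sub>0"

lemma alpha0_bounds: "0 \<le> \<alpha>\<^sub>0" "\<alpha>\<^sub>0 < q"
  using q_ge_3 by (simp_all add: \<alpha>\<^sub>0_def)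

lemma N0_eq: "N\<^sub>0 = \<alpha>\<^sub>0 + \<beta>\<^sub>0 * q"
  by (simp add: \<alpha>\<^sub>0_def \<beta>\<^sub>0_def)

lemma period_sum_corner:
  "(\<Sum>j\<le>nat (q - 1). gbinom (\<kappa> + int j) \<kappa> * (if N\<^sub>0 - int j = 0 then 1 else 0)) =
    (if \<beta>\<^sub>0 = 0 then corner_binom else 0)"
proof -
  have "(\<Sum>j\<le>nat (q - 1). gbinom (\<kappa> + int j) \<kappa> * (if N\<^sub>0 - int j = 0 then 1 else 0)) =
      (\<Sum>j\<le>nat (q - 1). if j = nat N\<^sub>0 then (if 0 \<le> N\<^sub>0 then gbinom (\<kappa> + int j) \<kappa> else 0) else 0)"
    by (rule sum.cong) auto
  also have "\<dots> = (if 0 \<le> N\<^sub>0 \<and> N\<^sub>0 < q then gbinom (\<kappa> + N\<^sub>0) \<kappa> else 0)"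
    using q_ge_3 by (auto simp: nat_le_eq_zle)
  also have "\<dots> = (if \<beta>\<^sub>0 = 0 then corner_binom else 0)"
  proof (cases "\<beta>\<^sub>0 = 0")
    case True
    then have "N\<^sub>0 = \<alpha>\<^sub>0" "M = \<kappa> + \<alpha>\<^sub>0"
      by (simp_all add: N0_eq M_def)
    moreover have "gbinom (\<kappa> + \<alpha>\<^sub>0) \<kappa> = gbinom (\<kappa> + \<alpha>\<^sub>0) \<alpha>\<^sub>0"
      using gbinom_symmetric[of \<kappa> "\<kappa> + \<alpha>\<^sub>0"] kappa_bounds alpha0_bounds by simp
    ultimately show ?thesis
      using True alpha0_bounds by (simp add: corner_binom_def)
  next
    case False
    then have "\<not> (0 \<le> N\<^sub>0 \<and> N\<^sub>0 < q)"
      by (auto simp: \<beta>\<^sub>0_def)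
    with False show ?thesis
      by auto
  qed
  finally show ?thesis .
qed

lemma period_sum_head:
  "(\<Sum>j\<le>nat \<alpha>\<^sub>0. gbinom (\<kappa> + int j) \<kappa> * digit_gbinom q (N\<^sub>0 - int j)) =
    (if 0 \<le> \<beta>\<^sub>0 \<and> \<beta>\<^sub>0 \<le> q - 2 then head_binom else 0)"
proof -
  have digits: "(N\<^sub>0 - int j) div q = \<beta>\<^sub>0" "(N\<^sub>0 - int j) mod q = \<alpha>\<^sub>0 - int j"
    if "j \<le> nat \<alpha>\<^sub>0" for j
  proof -
    have N: "N\<^sub>0 - int j = (\<alpha>\<^sub>0 - int j) + \<beta>\<^sub>0 * q"
      using N0_eq by simp
    show "(N\<^sub>0 - int j) div q = \<beta>\<^sub>0" "(N\<^sub>0 - int j) mod q = \<alpha>\<^sub>0 - int j"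
      unfolding N using that alpha0_bounds by simp_all
  qed
  show ?thesis
  proof (cases "0 \<le> \<beta>\<^sub>0 \<and> \<beta>\<^sub>0 \<le> q - 2")
    case True
    then have "(\<Sum>j\<le>nat \<alpha>\<^sub>0. gbinom (\<kappa> + int j) \<kappa> * digit_gbinom q (N\<^sub>0 - int j)) =
        (\<Sum>j\<le>nat \<alpha>\<^sub>0. gbinom (\<kappa> + int j) \<kappa> * gbinom (\<alpha>\<^sub>0 - int j + \<beta>\<^sub>0) \<beta>\<^sub>0)"
      by (intro sum.cong) (auto simp: digit_gbinom_def digits)
    also have "\<dots> = head_binom"
      using sum_gbinom_upper_convolution[of \<alpha>\<^sub>0 \<beta>\<^sub>0 \<kappa>] True alpha0_bounds kappa_bounds
      by (simp add: head_binom_def M_def)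
    finally show ?thesis
      using True by simp
  next
    case False
    then show ?thesis
      by (auto simp: digit_gbinom_def digits intro!: sum.neutral)
  qed
qed

lemma period_sum_tail:
  "[(\<Sum>j = Suc (nat \<alpha>\<^sub>0)..nat (q - 1). gbinom (\<kappa> + int j) \<kappa> * digit_gbinom q (N\<^sub>0 - int j)) =
    (if 1 \<le> \<beta>\<^sub>0 \<and> \<beta>\<^sub>0 \<le> q - 1 then tail_binom else 0)] (mod int p)"
proof -
  have digits: "(N\<^sub>0 - int j) div q = \<beta>\<^sub>0 - 1" "(N\<^sub>0 - int j) mod q = \<alpha>\<^sub>0 + q - int j"
    if "j \<in> {Suc (nat \<alpha>\<^sub>0)..nat (q - 1)}" for j
  proof -
    have N: "N\<^sub>0 - int j = (\<alpha>\<^sub>0 + q - int j) + (\<beta>\<^sub>0 - 1) * q"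
      using N0_eq by (simp add: algebra_simps)
    show "(N\<^sub>0 - int j) div q = \<beta>\<^sub>0 - 1" "(N\<^sub>0 - int j) mod q = \<alpha>\<^sub>0 + q - int j"
      unfolding N using that alpha0_bounds by auto
  qed
  show ?thesis
  proof (cases "1 \<le> \<beta>\<^sub>0 \<and> \<beta>\<^sub>0 \<le> q - 1")
    case True
    then have "(\<Sum>j = Suc (nat \<alpha>\<^sub>0)..nat (q - 1). gbinom (\<kappa> + int j) \<kappa> * digit_gbinom q (N\<^sub>0 - int j)) =
        (\<Sum>j = Suc (nat \<alpha>\<^sub>0)..nat (q - 1). gbinom (\<kappa> + int j) \<kappa> * gbinom (\<alpha>\<^sub>0 + q - int j + (\<beta>\<^sub>0 - 1)) (\<beta>\<^sub>0 - 1))"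
      by (intro sum.cong) (auto simp: digit_gbinom_def digits algebra_simps)
    also have "[\<dots> = gbinom (M + q) (\<alpha>\<^sub>0 + q) - 2 * gbinom M \<alpha>\<^sub>0] (mod int p)"
      using sum_gbinom_convolution_tail_cong[OF prime_p q_def, of \<alpha>\<^sub>0 "\<beta>\<^sub>0 - 1" \<kappa>]
        True alpha0_bounds kappa_bounds
      by (simp add: M_def algebra_simps)
    also have "[gbinom (M + q) (\<alpha>\<^sub>0 + q) - 2 * gbinom M \<alpha>\<^sub>0 = tail_binom] (mod int p)"
      unfolding tail_binom_def using alpha0_bounds by (rule gbinom_shift_both_cong[OF prime_p q_def])
    finally show ?thesis
      using True by simp
  next
    case False
    then show ?thesis
      by (auto simp: digit_gbinom_def digits intro!: sum.neutral)
  qed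
qed

lemma sumIII_cong_binoms:
  "[sumIII q n = (if 0 \<le> \<beta>\<^sub>0 \<and> \<beta>\<^sub>0 \<le> q - 2 then head_binom else 0)
      + (if 1 \<le> \<beta>\<^sub>0 \<and> \<beta>\<^sub>0 \<le> q - 1 then tail_binom else 0)
      - (if \<beta>\<^sub>0 = 0 then corner_binom else 0)] (mod int p)"
proof -
  define f where "f j = gbinom (\<kappa> + int j) \<kappa> * digit_gbinom q (N\<^sub>0 - int j)" for j
  have "(\<Sum>j\<le>nat (q - 1). f j) = (\<Sum>j\<le>nat \<alpha>\<^sub>0. f j) + (\<Sum>j = Suc (nat \<alpha>\<^sub>0)..nat (q - 1). f j)"
    using sum_up_index_split[of f "nat \<alpha>\<^sub>0" "nat (q - 1) - nat \<alpha>\<^sub>0"] alpha0_bounds by simp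
  then have "(\<Sum>j\<le>nat (q - 1). gbinom (\<kappa> + int j) \<kappa> *
      (digit_gbinom q (N\<^sub>0 - int j) - (if N\<^sub>0 - int j = 0 then 1 else 0))) =
      (\<Sum>j\<le>nat \<alpha>\<^sub>0. f j) + (\<Sum>j = Suc (nat \<alpha>\<^sub>0)..nat (q - 1). f j) - (if \<beta>\<^sub>0 = 0 then corner_binom else 0)"
    unfolding period_sum_corner[symmetric] by (simp only: f_def right_diff_distrib sum_subtractf)
  then have "[sumIII q n = (\<Sum>j\<le>nat \<alpha>\<^sub>0. f j) + (\<Sum>j = Suc (nat \<alpha>\<^sub>0)..nat (q - 1). f j)
      - (if \<beta>\<^sub>0 = 0 then corner_binom else 0)] (mod int p)"
    using sumIII_cong_period_sum by simp
  also have "[(\<Sum>j\<le>nat \<alpha>\<^sub>0. f j) + (\<Sum>j = Suc (nat \<alpha>\<^sub>0)..nat (q - 1). f j)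
      - (if \<beta>\<^sub>0 = 0 then corner_binom else 0) =
      (if 0 \<le> \<beta>\<^sub>0 \<and> \<beta>\<^sub>0 \<le> q - 2 then head_binom else 0)
      + (if 1 \<le> \<beta>\<^sub>0 \<and> \<beta>\<^sub>0 \<le> q - 1 then tail_binom else 0)
      - (if \<beta>\<^sub>0 = 0 then corner_binom else 0)] (mod int p)"
    unfolding f_def period_sum_head by (intro cong_add cong_diff cong_refl period_sum_tail)
  finally show ?thesis .
qed

lemma frac_decomposition:
  "real_of_int (u + v) / real_of_int (q - 1) = real_of_int \<tau> + real_of_int \<rho> / real_of_int (q - 1)"
  "0 \<le> real_of_int \<rho> / real_of_int (q - 1)" "real_of_int \<rho> / real_of_int (q - 1) < 1"
proof -
  have q1: "real_of_int (q - 1) > 0"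
    using q_ge_3 by simp
  have "real_of_int (u + v) = real_of_int \<tau> * real_of_int (q - 1) + real_of_int \<rho>"
    using u_plus_v_eq by (metis of_int_add of_int_mult)
  then show "real_of_int (u + v) / real_of_int (q - 1) = real_of_int \<tau> + real_of_int \<rho> / real_of_int (q - 1)"
    using q1 by (simp add: field_simps)
  show "0 \<le> real_of_int \<rho> / real_of_int (q - 1)"
    using rho_bounds q1 by simp
  have "real_of_int \<rho> < real_of_int (q - 1)"
    using rho_bounds by (simp only: of_int_less_iff)
  then show "real_of_int \<rho> / real_of_int (q - 1) < 1"
    using q1 by simp
qed

definition "rhs_term e = (if even (v + e) then 1 else -1) * ibinom (\<rho> + v - e) (q - 1 - \<rho> - u - e * q)"

lemma rhs_first_sum_eq:
  "(\<Sum>(s, \<epsilon>) \<in> {(s, \<epsilon>). -1 \<le> s \<and> s \<le> 1 \<and>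
        max (real_of_int s - real_of_int (u + v) / real_of_int (q - 1)) (real_of_int (v - q + 1))
          \<le> real_of_int \<epsilon> \<and>
        real_of_int \<epsilon> <
        min (real_of_int s - real_of_int (u + v) / real_of_int (q - 1) + 1) (real_of_int v)}.
      (if even (v + \<epsilon>) then 1 else -1) *
      ibinom (u + 2 * v - (s - \<epsilon>) * (q - 1) - \<epsilon>)
             ((s - 2 * \<epsilon> + 1) * (q - 1) - 2 * u - v - \<epsilon>)) =
   (\<Sum>s \<in> {-1, 0, 1}. if v - q + 1 \<le> s - \<tau> \<and> s - \<tau> < v then rhs_term (s - \<tau>) else 0)"
  (is "(\<Sum>(s, \<epsilon>) \<in> ?I. ?g s \<epsilon>) = _")
proof -
  define f where "f = real_of_int \<rho> / real_of_int (q - 1)"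
  define S where "S = {s \<in> {-1, 0, 1}. v - q + 1 \<le> s - \<tau> \<and> s - \<tau> < v}"
  have "?I = (\<lambda>s. (s, s - \<tau>)) ` S"
  proof -
    have "real_of_int s - real_of_int (u + v) / real_of_int (q - 1) = real_of_int (s - \<tau>) - f" for s
      unfolding frac_decomposition(1) f_def by simp
    then have "(s, \<epsilon>) \<in> ?I \<longleftrightarrow> s \<in> S \<and> \<epsilon> = s - \<tau>" for s \<epsilon>
      using int_window_below_iff[of f "s - \<tau>" \<epsilon>] frac_decomposition(2,3)
      by (auto simp: S_def f_def of_int_le_iff of_int_less_iff simp del: of_int_diff)
    then show ?thesis
      by auto
  qed
  then have "(\<Sum>(s, \<epsilon>) \<in> ?I. ?g s \<epsilon>) = (\<Sum>s\<in>S. ?g s (s - \<tau>))"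
    by (simp add: sum.reindex inj_on_def)
  also have "\<dots> = (\<Sum>s\<in>S. rhs_term (s - \<tau>))"
  proof (rule sum.cong)
    fix s
    have "u + 2 * v - (s - (s - \<tau>)) * (q - 1) - (s - \<tau>) = \<rho> + v - (s - \<tau>)"
      and "(s - 2 * (s - \<tau>) + 1) * (q - 1) - 2 * u - v - (s - \<tau>) = q - 1 - \<rho> - u - (s - \<tau>) * q"
      using u_plus_v_eq by (simp_all add: algebra_simps)
    then show "?g s (s - \<tau>) = rhs_term (s - \<tau>)"
      by (simp only: rhs_term_def)
  qed simp
  also have "\<dots> = (\<Sum>s \<in> {-1, 0, 1}. if v - q + 1 \<le> s - \<tau> \<and> s - \<tau> < v then rhs_term (s - \<tau>) else 0)"
    unfolding S_def by (rule sum.inter_filter) simp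
  finally show ?thesis .
qed

definition "rhs_second =
  (if -2 < v - q + \<tau> + 1 \<and> v - q + \<tau> + 1 \<le> 1 then ibinom \<rho> ((q + 1 - v - \<tau>) * (q - 1) - 2 * \<rho>) else 0)"

lemma rhs_second_sum_eq:
  "(\<Sum>s \<in> {s. max (-2) (real_of_int (v - q) + real_of_int (u + v) / real_of_int (q - 1)) < real_of_int s \<and>
        real_of_int s \<le> min 1 (real_of_int (v - q) + real_of_int (u + v) / real_of_int (q - 1) + 1)}.
      ibinom (u + v - (s - v + q - 1) * (q - 1)) ((s - 2 * v + 2 * q) * (q - 1) - 2 * (u + v))) =
   rhs_second"
  (is "(\<Sum>s \<in> ?I. ?g s) = _")
proof -
  define s\<^sub>0 where "s\<^sub>0 = v - q + \<tau> + 1"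
  have "real_of_int (v - q) + real_of_int (u + v) / real_of_int (q - 1) =
      real_of_int (v - q + \<tau>) + real_of_int \<rho> / real_of_int (q - 1)"
    unfolding frac_decomposition(1) by simp
  then have "s \<in> ?I \<longleftrightarrow> s = s\<^sub>0 \<and> -2 < s\<^sub>0 \<and> s\<^sub>0 \<le> 1" for s
    using int_window_above_iff[of "real_of_int \<rho> / real_of_int (q - 1)" "v - q + \<tau>" s] frac_decomposition(2,3)
    by (auto simp: s\<^sub>0_def of_int_le_iff of_int_less_iff simp del: of_int_diff of_int_add)
  then have I: "?I = (if -2 < s\<^sub>0 \<and> s\<^sub>0 \<le> 1 then {s\<^sub>0} else {})"
    by auto
  have "?g s\<^sub>0 = ibinom \<rho> ((q + 1 - v - \<tau>) * (q - 1) - 2 * \<rho>)"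
  proof -
    have "u + v - (s\<^sub>0 - v + q - 1) * (q - 1) = \<rho>"
      and "(s\<^sub>0 - 2 * v + 2 * q) * (q - 1) - 2 * (u + v) = (q + 1 - v - \<tau>) * (q - 1) - 2 * \<rho>"
      using u_plus_v_eq by (simp_all add: s\<^sub>0_def algebra_simps)
    then show ?thesis
      by simp
  qed
  then show ?thesis
    unfolding I rhs_second_def s\<^sub>0_def by simp
qed

text \<open>\<open>\<epsilon>\<^sub>0 = -1\<close> exactly when computing the low base-\<open>q\<close> digit of \<open>N\<^sub>0\<close> borrows from
  the high one.\<close>

definition "\<epsilon>\<^sub>0 = (if u \<le> \<kappa> then 0 else -1 :: int)"

lemma eps0_cases: "(u \<le> \<kappa> \<and> \<epsilon>\<^sub>0 = 0) \<or> (\<kappa> < u \<and> \<epsilon>\<^sub>0 = -1)"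
  by (auto simp: \<epsilon>\<^sub>0_def)

lemma digits_eq: "\<alpha>\<^sub>0 = \<kappa> - u - \<epsilon>\<^sub>0 * q" "\<beta>\<^sub>0 = q - 1 - v + \<epsilon>\<^sub>0"
proof -
  have N: "N\<^sub>0 = (\<kappa> - u - \<epsilon>\<^sub>0 * q) + (q - 1 - v + \<epsilon>\<^sub>0) * q"
    unfolding N\<^sub>0_def using n_eq by (simp add: algebra_simps)
  have "0 \<le> \<kappa> - u - \<epsilon>\<^sub>0 * q" "\<kappa> - u - \<epsilon>\<^sub>0 * q < q"
    using kappa_bounds u_nonneg u_le by (auto simp: \<epsilon>\<^sub>0_def)
  then show "\<alpha>\<^sub>0 = \<kappa> - u - \<epsilon>\<^sub>0 * q" "\<beta>\<^sub>0 = q - 1 - v + \<epsilon>\<^sub>0"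
    unfolding \<alpha>\<^sub>0_def \<beta>\<^sub>0_def N by simp_all
qed

lemma even_alpha0_plus_v_eps0: "even (\<alpha>\<^sub>0 + (v + \<epsilon>\<^sub>0))"
proof -
  have "\<alpha>\<^sub>0 + (v + \<epsilon>\<^sub>0) = (q - 1) * (1 + \<tau> - \<epsilon>\<^sub>0) - 2 * u"
    using digits_eq(1) u_plus_v_eq by (simp add: \<kappa>_def algebra_simps)
  then show ?thesis
    using odd_q by simp
qed

lemma rhs_term_head_cong: "[rhs_term \<epsilon>\<^sub>0 = head_binom] (mod int p)"
proof -
  have lower: "q - 1 - \<rho> - u - \<epsilon>\<^sub>0 * q = \<alpha>\<^sub>0"
    using digits_eq(1) by (simp add: \<kappa>_def)
  have "rhs_term \<epsilon>\<^sub>0 = (if even (v + \<epsilon>\<^sub>0) then 1 else -1) * gbinom (\<rho> + v - \<epsilon>\<^sub>0) \<alpha>\<^sub>0"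
    unfolding rhs_term_def lower using rho_bounds v_nonneg
    by (simp add: gbinom_of_nonneg \<epsilon>\<^sub>0_def)
  also have "gbinom (\<rho> + v - \<epsilon>\<^sub>0) \<alpha>\<^sub>0 = (-1) ^ nat \<alpha>\<^sub>0 * gbinom ((M + 1) + (-2) * q) \<alpha>\<^sub>0"
  proof -
    have upper: "\<alpha>\<^sub>0 - (\<rho> + v - \<epsilon>\<^sub>0) - 1 = (M + 1) + (-2) * q"
      using digits_eq(2) by (simp add: M_def \<kappa>_def algebra_simps)
    show ?thesis
      using gbinom_negated_upper[of \<alpha>\<^sub>0 "\<rho> + v - \<epsilon>\<^sub>0", unfolded upper] alpha0_bounds by simp
  qed
  also have "(if even (v + \<epsilon>\<^sub>0) then 1 else -1) * ((-1) ^ nat \<alpha>\<^sub>0 * gbinom ((M + 1) + (-2) * q) \<alpha>\<^sub>0) =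
      gbinom ((M + 1) + (-2) * q) \<alpha>\<^sub>0"
    using sign_times_minus_one_power[of \<alpha>\<^sub>0 "v + \<epsilon>\<^sub>0"] alpha0_bounds even_alpha0_plus_v_eps0
    by (simp add: mult.assoc[symmetric])
  also have "[\<dots> = head_binom] (mod int p)"
    unfolding head_binom_def by (intro gbinom_periodic_cong[OF prime_p q_def]) (use alpha0_bounds in auto)
  finally show ?thesis .
qed

lemma rhs_term_tail_eq: "rhs_term (\<epsilon>\<^sub>0 - 1) = tail_binom"
proof -
  have lower: "q - 1 - \<rho> - u - (\<epsilon>\<^sub>0 - 1) * q = \<alpha>\<^sub>0 + q"
    using digits_eq(1) by (simp add: \<kappa>_def algebra_simps)
  have "rhs_term (\<epsilon>\<^sub>0 - 1) = (if even (v + (\<epsilon>\<^sub>0 - 1)) then 1 else -1) * gbinom (\<rho> + v - (\<epsilon>\<^sub>0 - 1)) (\<alpha>\<^sub>0 + q)"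
    unfolding rhs_term_def lower using rho_bounds v_nonneg
    by (simp add: gbinom_of_nonneg \<epsilon>\<^sub>0_def)
  also have "gbinom (\<rho> + v - (\<epsilon>\<^sub>0 - 1)) (\<alpha>\<^sub>0 + q) = (-1) ^ nat (\<alpha>\<^sub>0 + q) * gbinom (M - q) (\<alpha>\<^sub>0 + q)"
  proof -
    have upper: "(\<alpha>\<^sub>0 + q) - (\<rho> + v - (\<epsilon>\<^sub>0 - 1)) - 1 = M - q"
      using digits_eq(2) by (simp add: M_def \<kappa>_def algebra_simps)
    show ?thesis
      using gbinom_negated_upper[of "\<alpha>\<^sub>0 + q" "\<rho> + v - (\<epsilon>\<^sub>0 - 1)", unfolded upper] alpha0_bounds q_ge_3
      by simp
  qed
  also have "(if even (v + (\<epsilon>\<^sub>0 - 1)) then 1 else -1) * ((-1) ^ nat (\<alpha>\<^sub>0 + q) * gbinom (M - q) (\<alpha>\<^sub>0 + q)) =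
      tail_binom"
  proof -
    have "even ((\<alpha>\<^sub>0 + q) + (v + (\<epsilon>\<^sub>0 - 1)))"
      using even_alpha0_plus_v_eps0 odd_q by simp
    then show ?thesis
      using sign_times_minus_one_power[of "\<alpha>\<^sub>0 + q" "v + (\<epsilon>\<^sub>0 - 1)"] alpha0_bounds q_ge_3
      by (simp add: tail_binom_def mult.assoc[symmetric])
  qed
  finally show ?thesis .
qed

lemma rhs_term_eq_0:
  assumes "v - q + 1 \<le> e" and "e \<noteq> \<epsilon>\<^sub>0" and "e \<noteq> \<epsilon>\<^sub>0 - 1"
  shows "rhs_term e = 0"
proof -
  have lower: "q - 1 - \<rho> - u - e * q = \<alpha>\<^sub>0 - (e - \<epsilon>\<^sub>0) * q"
    using digits_eq(1) by (simp add: \<kappa>_def algebra_simps)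
  have "ibinom (\<rho> + v - e) (q - 1 - \<rho> - u - e * q) = 0"
  proof (cases "\<epsilon>\<^sub>0 + 1 \<le> e")
    case True
    then have "1 * q \<le> (e - \<epsilon>\<^sub>0) * q"
      using q_ge_3 by (intro mult_right_mono) auto
    then have "q - 1 - \<rho> - u - e * q < 0"
      unfolding lower using alpha0_bounds by linarith
    then show ?thesis
      by (simp add: ibinom_def)
  next
    case False
    then have e: "e \<le> \<epsilon>\<^sub>0 - 2"
      using assms(2,3) by linarith
    have "2 * (q - 1) \<le> (\<epsilon>\<^sub>0 - e) * (q - 1)"
      using e q_ge_3 by (intro mult_right_mono) auto
    moreover have "(q - 1 - \<rho> - u - e * q) - (\<rho> + v - e) = (\<alpha>\<^sub>0 - \<rho> - v + \<epsilon>\<^sub>0) + (\<epsilon>\<^sub>0 - e) * (q - 1)"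
      unfolding lower by (simp add: algebra_simps)
    moreover have "0 < (\<alpha>\<^sub>0 - \<rho> - v + \<epsilon>\<^sub>0) + 2 * (q - 1)"
      using assms(1) e digits_eq(1) eps0_cases tau_cases rho_bounds u_nonneg v_nonneg u_le v_le q_ge_3
      by (auto simp: \<kappa>_def)
    ultimately have "\<rho> + v - e < q - 1 - \<rho> - u - e * q"
      by linarith
    then show ?thesis
      by (simp add: ibinom_def)
  qed
  then show ?thesis
    by (simp add: rhs_term_def)
qed

definition "head_present \<longleftrightarrow> -1 \<le> \<tau> + \<epsilon>\<^sub>0 \<and> \<tau> + \<epsilon>\<^sub>0 \<le> 1 \<and> v - q + 1 \<le> \<epsilon>\<^sub>0 \<and> \<epsilon>\<^sub>0 < v"
definition "tail_present \<longleftrightarrow> -1 \<le> \<tau> + \<epsilon>\<^sub>0 - 1 \<and> \<tau> + \<epsilon>\<^sub>0 - 1 \<le> 1 \<and> v - q + 1 \<le> \<epsilon>\<^sub>0 - 1 \<and> \<epsilon>\<^sub>0 - 1 < v"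

lemma rhs_first_eq:
  "(\<Sum>s \<in> {-1, 0, 1}. if v - q + 1 \<le> s - \<tau> \<and> s - \<tau> < v then rhs_term (s - \<tau>) else 0) =
    (if head_present then rhs_term \<epsilon>\<^sub>0 else 0) + (if tail_present then rhs_term (\<epsilon>\<^sub>0 - 1) else 0)"
proof -
  define A where "A s = (if s = \<tau> + \<epsilon>\<^sub>0 \<and> v - q + 1 \<le> \<epsilon>\<^sub>0 \<and> \<epsilon>\<^sub>0 < v then rhs_term \<epsilon>\<^sub>0 else 0)" for s
  define B where "B s = (if s = \<tau> + \<epsilon>\<^sub>0 - 1 \<and> v - q + 1 \<le> \<epsilon>\<^sub>0 - 1 \<and> \<epsilon>\<^sub>0 - 1 < v
      then rhs_term (\<epsilon>\<^sub>0 - 1) else 0)" for s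
  have "(\<Sum>s \<in> {-1, 0, 1}. if v - q + 1 \<le> s - \<tau> \<and> s - \<tau> < v then rhs_term (s - \<tau>) else 0) =
      (\<Sum>s \<in> {-1, 0, 1}. A s + B s)"
    using rhs_term_eq_0 by (intro sum.cong) (auto simp: A_def B_def)
  also have "\<dots> = (if head_present then rhs_term \<epsilon>\<^sub>0 else 0) + (if tail_present then rhs_term (\<epsilon>\<^sub>0 - 1) else 0)"
    by (auto simp: sum.distrib A_def B_def head_present_def tail_present_def)
  finally show ?thesis .
qed

lemma rhsIII_cong_binoms:
  "[rhsIII q u v = (if head_present then head_binom else 0) + (if tail_present then tail_binom else 0)
      - rhs_second] (mod int p)"
proof -
  have "rhsIII q u v = (if head_present then rhs_term \<epsilon>\<^sub>0 else 0) + (if tail_present then tail_binom else 0)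
      - rhs_second"
    unfolding rhsIII_def rhs_first_sum_eq rhs_second_sum_eq rhs_first_eq rhs_term_tail_eq ..
  moreover have "[(if head_present then rhs_term \<epsilon>\<^sub>0 else 0) = (if head_present then head_binom else 0)] (mod int p)"
    using rhs_term_head_cong by simp
  ultimately show ?thesis
    by (simp add: cong_add cong_diff)
qed

lemma head_range_iff_present: "\<not> (u \<le> \<kappa> \<and> \<tau> = 2) \<Longrightarrow> (0 \<le> \<beta>\<^sub>0 \<and> \<beta>\<^sub>0 \<le> q - 2) \<longleftrightarrow> head_present"
  using digits_eq(2) eps0_cases tau_cases rho_bounds u_nonneg v_nonneg u_le v_le q_ge_3
  unfolding head_present_def by (auto simp: \<kappa>_def)

lemma tail_range_iff_present: "\<not> (\<kappa> < u \<and> \<tau> = 0) \<Longrightarrow> (1 \<le> \<beta>\<^sub>0 \<and> \<beta>\<^sub>0 \<le> q - 1) \<longleftrightarrow> tail_present"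
  using digits_eq(2) eps0_cases tau_cases rho_bounds u_nonneg v_nonneg u_le v_le q_ge_3
  unfolding tail_present_def by (auto simp: \<kappa>_def)

lemma tail_binom_eq_0: "\<kappa> < u \<Longrightarrow> \<tau> = 0 \<Longrightarrow> tail_binom = 0"
proof -
  assume "\<kappa> < u" "\<tau> = 0"
  then have "0 \<le> M - q" "M - q < \<alpha>\<^sub>0 + q"
    using digits_eq eps0_cases tau_cases rho_bounds u_nonneg v_nonneg u_le v_le q_ge_3
    by (auto simp: M_def \<kappa>_def)
  then show ?thesis
    unfolding tail_binom_def by (rule gbinom_eq_0)
qed

text \<open>The exceptional case is \<open>u = v = q - 1\<close>, i.e. \<open>n = q\<^sup>2 - 1\<close>.\<close>

lemma maximal_case:
  assumes "u \<le> \<kappa>" and "\<tau> = 2"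
  shows "\<beta>\<^sub>0 = 0" "head_binom = corner_binom" "rhs_second = 0" "\<not> head_present"
proof -
  have "\<epsilon>\<^sub>0 = 0"
    using assms eps0_cases by auto
  moreover have "u = q - 1" "v = q - 1" "\<rho> = 0"
    using assms tau_cases rho_bounds u_nonneg v_nonneg u_le v_le by auto
  moreover have "\<alpha>\<^sub>0 = \<kappa> - u" "\<beta>\<^sub>0 = q - 1 - v" "\<kappa> = q - 1 - \<rho>"
    using digits_eq \<open>\<epsilon>\<^sub>0 = 0\<close> by (simp_all add: \<kappa>_def)
  ultimately have "\<alpha>\<^sub>0 = 0" "\<beta>\<^sub>0 = 0"
    by linarith+
  then show "\<beta>\<^sub>0 = 0" "head_binom = corner_binom"
    by (simp_all add: head_binom_def corner_binom_def)
  have "v - q + \<tau> + 1 = 2"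
    using \<open>v = q - 1\<close> assms by linarith
  then show "rhs_second = 0"
    by (simp add: rhs_second_def)
  show "\<not> head_present"
    using assms \<open>\<epsilon>\<^sub>0 = 0\<close> by (simp add: head_present_def)
qed

lemma corner_binom_cong_rhs_second:
  assumes \<beta>\<^sub>0: "\<beta>\<^sub>0 = 0" and not_maximal: "\<not> (u \<le> \<kappa> \<and> \<tau> = 2)"
  shows "[corner_binom = rhs_second] (mod int p)"
proof -
  have v: "v = q - 1 + \<epsilon>\<^sub>0"
    using digits_eq(2) \<beta>\<^sub>0 by simp
  then have \<tau>: "\<tau> = 1"
    using not_maximal eps0_cases tau_cases rho_bounds u_nonneg v_nonneg u_le v_le q_ge_3
    by (auto simp: \<kappa>_def)
  then have \<alpha>\<^sub>0: "\<alpha>\<^sub>0 = (q - 1) * (1 - \<epsilon>\<^sub>0) - 2 * \<rho>"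
    using digits_eq(1) u_plus_v_eq v by (simp add: \<kappa>_def algebra_simps)
  then have "even \<alpha>\<^sub>0"
    using odd_q by simp
  have "rhs_second = ibinom \<rho> \<alpha>\<^sub>0"
  proof -
    have "-2 < v - q + \<tau> + 1 \<and> v - q + \<tau> + 1 \<le> 1"
      using v \<tau> eps0_cases by auto
    moreover have "(q + 1 - v - \<tau>) * (q - 1) - 2 * \<rho> = \<alpha>\<^sub>0"
      using v \<tau> \<alpha>\<^sub>0 by (simp add: algebra_simps)
    ultimately show ?thesis
      by (simp add: rhs_second_def)
  qed
  also have "ibinom \<rho> \<alpha>\<^sub>0 = gbinom \<rho> \<alpha>\<^sub>0"
    using rho_bounds by (simp add: gbinom_of_nonneg)
  finally have second: "rhs_second = gbinom \<rho> \<alpha>\<^sub>0" .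
  have "corner_binom = (-1) ^ nat \<alpha>\<^sub>0 * gbinom (\<alpha>\<^sub>0 - M - 1) \<alpha>\<^sub>0"
    unfolding corner_binom_def by (rule gbinom_negated_upper) (use alpha0_bounds in simp)
  also have "\<alpha>\<^sub>0 - M - 1 = \<rho> + (-1) * q"
    using \<beta>\<^sub>0 by (simp add: M_def \<kappa>_def)
  also have "(-1 :: int) ^ nat \<alpha>\<^sub>0 = 1"
    using \<open>even \<alpha>\<^sub>0\<close> alpha0_bounds by (simp add: even_nat_iff)
  finally have "corner_binom = gbinom (\<rho> + (-1) * q) \<alpha>\<^sub>0"
    by simp
  also have "[\<dots> = gbinom \<rho> \<alpha>\<^sub>0] (mod int p)"
    by (intro gbinom_periodic_cong[OF prime_p q_def]) (use alpha0_bounds in auto)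
  finally show ?thesis
    unfolding second .
qed

lemma rhs_second_eq_0:
  assumes "\<beta>\<^sub>0 \<noteq> 0"
  shows "rhs_second = 0"
proof (cases "-2 < v - q + \<tau> + 1 \<and> v - q + \<tau> + 1 \<le> 1")
  case True
  define w where "w = q + 1 - v - \<tau>"
  have "w = 1 \<or> w = 2 \<or> w = 3"
    using True by (auto simp: w_def)
  then have "w * (q - 1) - 2 * \<rho> < 0 \<or> \<rho> < w * (q - 1) - 2 * \<rho>"
    using assms digits_eq(2) eps0_cases tau_cases rho_bounds u_nonneg v_nonneg u_le v_le q_ge_3
    by (auto simp: w_def \<kappa>_def algebra_simps)
  then show ?thesis
    by (auto simp: rhs_second_def ibinom_def w_def)
qed (auto simp: rhs_second_def)

lemma binoms_cong_rhs:
  "[(if 0 \<le> \<beta>\<^sub>0 \<and> \<beta>\<^sub>0 \<le> q - 2 then head_binom else 0)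
      + (if 1 \<le> \<beta>\<^sub>0 \<and> \<beta>\<^sub>0 \<le> q - 1 then tail_binom else 0)
      - (if \<beta>\<^sub>0 = 0 then corner_binom else 0) =
    (if head_present then head_binom else 0) + (if tail_present then tail_binom else 0)
      - rhs_second] (mod int p)"
proof (cases "u \<le> \<kappa> \<and> \<tau> = 2")
  case True
  then have "\<not> tail_present"
    using maximal_case(1) tail_range_iff_present by auto
  then show ?thesis
    using maximal_case True q_ge_3 by simp
next
  case not_maximal: False
  have "(if 1 \<le> \<beta>\<^sub>0 \<and> \<beta>\<^sub>0 \<le> q - 1 then tail_binom else 0) = (if tail_present then tail_binom else 0)"
    using tail_binom_eq_0 tail_range_iff_present by (cases "\<kappa> < u \<and> \<tau> = 0") auto
  moreover have "[(if \<beta>\<^sub>0 = 0 then corner_binom else 0) = rhs_second] (mod int p)"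
    using corner_binom_cong_rhs_second[OF _ not_maximal] rhs_second_eq_0 by (cases "\<beta>\<^sub>0 = 0") auto
  ultimately show ?thesis
    using head_range_iff_present[OF not_maximal] by (simp add: cong_diff)
qed

end

theorem lemma4p3:
  fixes p m :: nat and q n u v :: int
  assumes "prime p" and "odd p" and "m \<ge> 1" and "q = int p ^ m"
    and "1 \<le> n" and "n \<le> q^2 - 1"
    and "0 \<le> u" and "u \<le> q - 1" and "0 \<le> v" and "v \<le> q - 1"
    and "n = u + v * q"
  shows "[sumIII q n = rhsIII q u v] (mod int p)"
proof -
  interpret sumIII_setup p m q n u v
    using assms by unfold_locales
  show ?thesis
    using cong_trans[OF sumIII_cong_binoms cong_trans[OF binoms_cong_rhs cong_sym[OF rhsIII_cong_binoms]]] .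
qed

end
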